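(* Consider the private information delivery (PID) problem with $K\ge 2$ messages, $N$ servers and $M=2$ messages stored per server. Then the capacity is $$C=\begin{cases} 2/K & \text{if } N\ge \lceil K/2\rceil+1,\\ 1/\lceil K/2\rceil & \text{if } N=\lceil K/2\rceil,\\ 0 & \text{if } N<\lceil K/2\rceil.\end{cases}$$
   Context: The PID problem with parameters $(K,N,M)$: There are $K$ independent messages $W_1,\dots,W_K$, each consisting of $L$ i.i.d. uniform symbols from a finite field $\mathbb{F}_p$, so that (in $p$-ary units) $H(W_k)=L$ for all $k$ and $H(W_1,\dots,W_K)=\sum_k H(W_k)$. There are $N$ servers; server $n$ stores $S_n=\{W_k : k\in\mathcal{S}_n\}$ for some $\mathcal{S}_n\subset\{1,\dots,K\}$ with $|\mathcal{S}_n|=M$ (a design choice). The servers share a common random variable $Z$ independent of the messages. For each $k\in\{1,\dots,K\}$, server $n$ sends an answer $A_n^{[k]}$ that is a deterministic function of $(S_n,Z)$ and consists of $D_n$ symbols of $\mathbb{F}_p$ ($D_n$ independent of $k$). Correctness: $H(W_k\mid A_1^{[k]},\dots,A_N^{[k]})=0$ for all $k$. Privacy: for all $k$, $(A_1^{[1]},\dots,A_N^{[1]},W_1)$ and $(A_1^{[k]},\dots,A_N^{[k]},W_k)$ are identically distributed. The rate is $R=L/\sum_n D_n$; a rate is achievable if some scheme (choice of $L$, $p$, storage sets, $Z$, answer functions) satisfying these constraints has rate at least $R$; the capacity $C$ is the supremum of achievable rates over all storage designs and schemes (taken to be $0$ if no scheme exists). *)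

theory Defs
  imports "HOL-Probability.Probability"
begin

text \<open>Message tuples: message k (for 1 \<le> k \<le> K) is a vector of L symbols of F_p,
  encoded as naturals below p; all other entries are 0 (extensional encoding).\<close>
definition pid_msgs :: "nat \<Rightarrow> nat \<Rightarrow> nat \<Rightarrow> (nat \<Rightarrow> nat \<Rightarrow> nat) set" where
  "pid_msgs K L p =
     {w. \<forall>k i. (if 1 \<le> k \<and> k \<le> K \<and> i < L then w k i < p else w k i = 0)}"

definition pid_answers ::
  "nat \<Rightarrow> (nat \<Rightarrow> nat \<Rightarrow> (nat \<Rightarrow> nat \<Rightarrow> nat) \<Rightarrow> nat \<Rightarrow> nat list)
     \<Rightarrow> nat \<Rightarrow> (nat \<Rightarrow> nat \<Rightarrow> nat) \<Rightarrow> nat \<Rightarrow> nat list list" where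
  "pid_answers N f k w z = map (\<lambda>n. f n k w z) [1..<N+1]"

text \<open>A PID scheme: field size p (prime), message length L, storage sets S,
  distribution Zd of the common randomness Z (independent of the messages),
  answer functions f n k (server n, demand k), answer lengths D n.\<close>
definition pid_scheme ::
  "nat \<Rightarrow> nat \<Rightarrow> nat \<Rightarrow> nat \<Rightarrow> nat \<Rightarrow> (nat \<Rightarrow> nat set) \<Rightarrow> nat pmf
     \<Rightarrow> (nat \<Rightarrow> nat \<Rightarrow> (nat \<Rightarrow> nat \<Rightarrow> nat) \<Rightarrow> nat \<Rightarrow> nat list) \<Rightarrow> (nat \<Rightarrow> nat) \<Rightarrow> bool" where
  "pid_scheme K N M p L S Zd f D \<longleftrightarrow>
     prime p \<and> L \<ge> 1 \<and>
     (\<forall>n\<in>{1..N}. S n \<subseteq> {1..K} \<and> card (S n) = M) \<and>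
     \<comment> \<open>answer of server n depends only on its stored messages and Z\<close>
     (\<forall>n\<in>{1..N}. \<forall>k\<in>{1..K}. \<forall>w\<in>pid_msgs K L p. \<forall>w'\<in>pid_msgs K L p. \<forall>z.
         (\<forall>j\<in>S n. w j = w' j) \<longrightarrow> f n k w z = f n k w' z) \<and>
     \<comment> \<open>answer of server n consists of D n symbols of F_p\<close>
     (\<forall>n\<in>{1..N}. \<forall>k\<in>{1..K}. \<forall>w\<in>pid_msgs K L p. \<forall>z\<in>set_pmf Zd.
         length (f n k w z) = D n \<and> set (f n k w z) \<subseteq> {..<p}) \<and>
     \<comment> \<open>correctness: H(W_k | A^[k]) = 0, i.e. W_k is a.s. a function of the answers\<close>
     (\<forall>k\<in>{1..K}. \<forall>w\<in>pid_msgs K L p. \<forall>w'\<in>pid_msgs K L p.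
         \<forall>z\<in>set_pmf Zd. \<forall>z'\<in>set_pmf Zd.
         pid_answers N f k w z = pid_answers N f k w' z' \<longrightarrow> w k = w' k) \<and>
     \<comment> \<open>privacy: (A^[k], W_k) has the same distribution as (A^[1], W_1)\<close>
     (\<forall>k\<in>{1..K}.
        map_pmf (\<lambda>(w, z). (pid_answers N f k w z, w k))
                (pair_pmf (pmf_of_set (pid_msgs K L p)) Zd)
      = map_pmf (\<lambda>(w, z). (pid_answers N f 1 w z, w 1))
                (pair_pmf (pmf_of_set (pid_msgs K L p)) Zd))"

definition pid_rates :: "nat \<Rightarrow> nat \<Rightarrow> nat \<Rightarrow> real set" where
  "pid_rates K N M =
     {real L / real (\<Sum>n\<in>{1..N}. D n) | p L S Zd f D. pid_scheme K N M p L S Zd f D}"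

definition pid_capacity :: "nat \<Rightarrow> nat \<Rightarrow> nat \<Rightarrow> real" where
  "pid_capacity K N M = (if pid_rates K N M = {} then 0 else Sup (pid_rates K N M))"

end

theory Submission
  imports Defs "HOL-Library.Nat_Bijection"
begin

text \<open>Fix the common randomness. Messages that differ only in \<open>W\<^sub>k\<close> produce the same
  answers at the servers not storing \<open>W\<^sub>k\<close>, so by correctness the answers of the servers
  storing \<open>W\<^sub>k\<close> determine \<open>W\<^sub>k\<close>; counting gives \<open>L \<le> \<Sum> D\<^sub>n\<close> over those servers. Summing
  over \<open>k\<close> counts every server \<open>M\<close> times, so \<open>K L \<le> M \<Sum>\<^sub>n D\<^sub>n\<close>, and every message must be stored
  somewhere, so \<open>K \<le> M N\<close>. If moreover \<open>M (N - 1) < K\<close>, every server stores a message held by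
  no other server, whence \<open>L \<le> D\<^sub>n\<close> for all \<open>n\<close>.

  In a binary linear scheme the servers jointly send \<open>z + E\<^sub>k W\<^sub>k\<close>, with \<open>z\<close>
  uniform on the kernel of a parity-check matrix \<open>P\<close> satisfying \<open>P E\<^sub>k = I\<close> for every \<open>k\<close>.
  The joint answer is then uniform whatever \<open>k\<close> is and \<open>P\<close> maps it to \<open>W\<^sub>k\<close>, which gives
  correctness and privacy at once. For \<open>M = 2\<close>, one check and one symbol per pair of messages
  give rate \<open>1 / \<lceil>K/2\<rceil>\<close>; for odd \<open>K\<close> and one more server, a design with two checks gives
  \<open>2 / K\<close>.\<close>

section \<open>Converse\<close>

definition holders :: "(nat \<Rightarrow> nat set) \<Rightarrow> nat \<Rightarrow> nat \<Rightarrow> nat set" where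
  "holders S N k = {n \<in> {1..N}. k \<in> S n}"

lemma finite_holders [simp]: "finite (holders S N k)"
  by (simp add: holders_def)

lemma pid_scheme_storage:
  assumes "pid_scheme K N M p L S Zd f D" and "n \<in> {1..N}"
  shows "S n \<subseteq> {1..K}" and "card (S n) = M"
  using assms unfolding pid_scheme_def by auto

lemma pid_scheme_length_pos: "pid_scheme K N M p L S Zd f D \<Longrightarrow> 1 \<le> L"
  unfolding pid_scheme_def by blast

lemma pid_scheme_answer_local:
  assumes "pid_scheme K N M p L S Zd f D" and "n \<in> {1..N}" and "k \<in> {1..K}"
    and "w \<in> pid_msgs K L p" and "w' \<in> pid_msgs K L p" and "\<forall>j\<in>S n. w j = w' j"
  shows "f n k w z = f n k w' z"
  using assms unfolding pid_scheme_def by blast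

lemma pid_scheme_answer_symbols:
  assumes "pid_scheme K N M p L S Zd f D" and "n \<in> {1..N}" and "k \<in> {1..K}"
    and "w \<in> pid_msgs K L p" and "z \<in> set_pmf Zd"
  shows "f n k w z \<in> {xs. set xs \<subseteq> {..<p} \<and> length xs = D n}"
  using assms unfolding pid_scheme_def by blast

lemma pid_scheme_correct:
  assumes "pid_scheme K N M p L S Zd f D" and "k \<in> {1..K}"
    and "w \<in> pid_msgs K L p" and "w' \<in> pid_msgs K L p"
    and "z \<in> set_pmf Zd" and "z' \<in> set_pmf Zd"
    and "pid_answers N f k w z = pid_answers N f k w' z'"
  shows "w k = w' k"
  using assms unfolding pid_scheme_def by blast

lemma pid_scheme_holders_determine_message:
  assumes sch: "pid_scheme K N M p L S Zd f D" and k: "k \<in> {1..K}"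
    and w: "w \<in> pid_msgs K L p" and w': "w' \<in> pid_msgs K L p"
    and others: "\<And>j. j \<noteq> k \<Longrightarrow> w j = w' j" and z: "z \<in> set_pmf Zd"
    and same: "\<And>n. n \<in> holders S N k \<Longrightarrow> f n k w z = f n k w' z"
  shows "w k = w' k"
proof -
  have "f n k w z = f n k w' z" if n: "n \<in> {1..N}" for n
  proof (cases "k \<in> S n")
    case True
    with n show ?thesis by (simp add: same holders_def)
  next
    case False
    then have "\<forall>j\<in>S n. w j = w' j" using others by metis
    with sch n k w w' show ?thesis by (rule pid_scheme_answer_local)
  qed
  then have "pid_answers N f k w z = pid_answers N f k w' z"
    unfolding pid_answers_def by (intro map_cong) auto
  with sch k w w' z z show ?thesis by (rule pid_scheme_correct)
qed

lemma pid_scheme_length_le_holders_download: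
  assumes sch: "pid_scheme K N M p L S Zd f D" and k: "k \<in> {1..K}"
  shows "L \<le> (\<Sum>n\<in>holders S N k. D n)"
proof -
  obtain z where z: "z \<in> set_pmf Zd" using set_pmf_not_empty by fast
  have p: "prime p" using sch unfolding pid_scheme_def by blast
  define words where "words d = {xs. set xs \<subseteq> {..<p} \<and> length xs = d}" for d
  define msg where "msg xs = (\<lambda>j i. if j = k \<and> i < L then xs ! i else 0)" for xs :: "nat list"
  define ans where "ans xs = (\<lambda>n\<in>holders S N k. f n k (msg xs) z)" for xs
  have msg: "msg xs \<in> pid_msgs K L p" if xs: "xs \<in> words L" for xs
  proof -
    have "xs ! i < p" if "i < L" for i
      using xs that nth_mem unfolding words_def by blast
    with k prime_gt_0_nat[OF p] show ?thesis unfolding pid_msgs_def msg_def by simp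
  qed
  have "inj_on ans (words L)"
  proof (rule inj_onI)
    fix xs ys assume xs: "xs \<in> words L" and ys: "ys \<in> words L" and "ans xs = ans ys"
    then have "f n k (msg xs) z = f n k (msg ys) z" if "n \<in> holders S N k" for n
      using that unfolding ans_def by (metis restrict_apply')
    then have eq: "msg xs k = msg ys k"
      by (intro pid_scheme_holders_determine_message[OF sch k msg[OF xs] msg[OF ys] _ z])
        (simp_all add: msg_def)
    have "xs ! i = ys ! i" if "i < L" for i
      using fun_cong[OF eq, of i] that by (simp add: msg_def)
    with xs ys show "xs = ys" unfolding words_def by (simp add: nth_equalityI)
  qed
  moreover have "ans ` words L \<subseteq> (\<Pi>\<^sub>E n\<in>holders S N k. words (D n))"
  proof (clarsimp simp: ans_def restrict_PiE_iff)
    fix xs n assume "xs \<in> words L" and "n \<in> holders S N k"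
    then show "f n k (msg xs) z \<in> words (D n)"
      using pid_scheme_answer_symbols[OF sch _ k msg z] unfolding holders_def words_def by blast
  qed
  ultimately have "card (words L) \<le> card (\<Pi>\<^sub>E n\<in>holders S N k. words (D n))"
    by (rule card_inj_on_le) (simp add: finite_PiE words_def finite_lists_length_eq)
  then have "p ^ L \<le> p ^ (\<Sum>n\<in>holders S N k. D n)"
    by (simp add: words_def card_PiE card_lists_length_eq power_sum)
  then show ?thesis by (rule power_le_imp_le_exp[OF prime_gt_1_nat[OF p]])
qed

lemma pid_scheme_sum_over_holders:
  fixes g :: "nat \<Rightarrow> nat"
  assumes sch: "pid_scheme K N M p L S Zd f D"
  shows "(\<Sum>k\<in>{1..K}. \<Sum>n\<in>holders S N k. g n) = M * (\<Sum>n\<in>{1..N}. g n)"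
proof -
  have "(\<Sum>k\<in>{1..K}. \<Sum>n\<in>holders S N k. g n) = (\<Sum>k\<in>{1..K}. \<Sum>n\<in>{1..N}. of_bool (k \<in> S n) * g n)"
    by (simp add: holders_def Int_def conj_commute)
  also have "\<dots> = (\<Sum>n\<in>{1..N}. \<Sum>k\<in>{1..K}. of_bool (k \<in> S n) * g n)"
    by (rule sum.swap)
  also have "\<dots> = (\<Sum>n\<in>{1..N}. M * g n)"
  proof (rule sum.cong[OF refl])
    fix n assume "n \<in> {1..N}"
    with pid_scheme_storage[OF sch this] show "(\<Sum>k\<in>{1..K}. of_bool (k \<in> S n) * g n) = M * g n"
      by (simp add: sum_distrib_right[symmetric] Int_absorb1 Int_def[symmetric])
  qed
  finally show ?thesis by (simp add: sum_distrib_left)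
qed

lemma pid_scheme_length_bound:
  assumes sch: "pid_scheme K N M p L S Zd f D"
  shows "K * L \<le> M * (\<Sum>n\<in>{1..N}. D n)"
proof -
  have "K * L = (\<Sum>k\<in>{1..K}. L)" by simp
  also have "\<dots> \<le> (\<Sum>k\<in>{1..K}. \<Sum>n\<in>holders S N k. D n)"
    by (intro sum_mono pid_scheme_length_le_holders_download[OF sch])
  also have "\<dots> = M * (\<Sum>n\<in>{1..N}. D n)"
    by (rule pid_scheme_sum_over_holders[OF sch])
  finally show ?thesis .
qed

lemma pid_scheme_holders_nonempty:
  assumes sch: "pid_scheme K N M p L S Zd f D" and k: "k \<in> {1..K}"
  shows "holders S N k \<noteq> {}"
  using pid_scheme_length_le_holders_download[OF sch k] pid_scheme_length_pos[OF sch] by auto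

lemma pid_scheme_sum_card_holders:
  assumes sch: "pid_scheme K N M p L S Zd f D"
  shows "(\<Sum>k\<in>{1..K}. card (holders S N k)) = M * N"
  using pid_scheme_sum_over_holders[OF sch, of "\<lambda>_. 1"] by simp

lemma pid_scheme_messages_le_storage:
  assumes sch: "pid_scheme K N M p L S Zd f D"
  shows "K \<le> M * N"
proof -
  have "K = (\<Sum>k\<in>{1..K}. 1)" by simp
  also have "\<dots> \<le> (\<Sum>k\<in>{1..K}. card (holders S N k))"
    using pid_scheme_holders_nonempty[OF sch] by (intro sum_mono) (simp add: Suc_le_eq card_gt_0_iff)
  also have "\<dots> = M * N"
    by (rule pid_scheme_sum_card_holders[OF sch])
  finally show ?thesis .
qed

lemma pid_scheme_unshared_message:
  assumes sch: "pid_scheme K N M p L S Zd f D" and MN: "M * (N - 1) < K" and n: "n \<in> {1..N}"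
  shows "\<exists>k\<in>S n. holders S N k = {n}"
proof (rule ccontr)
  assume none: "\<not> ?thesis"
  have Sn: "S n \<subseteq> {1..K}" "card (S n) = M" using pid_scheme_storage[OF sch n] by auto
  have shared: "2 \<le> card (holders S N k)" if k: "k \<in> S n" for k
  proof -
    have "n \<in> holders S N k" using n k by (simp add: holders_def)
    moreover from none k have "holders S N k \<noteq> {n}" by blast
    ultimately obtain m where "m \<in> holders S N k" and "m \<noteq> n" by blast
    with \<open>n \<in> holders S N k\<close> have "{n, m} \<subseteq> holders S N k" by blast
    then have "card {n, m} \<le> card (holders S N k)" by (rule card_mono[OF finite_holders])
    with \<open>m \<noteq> n\<close> show ?thesis by simp
  qed
  have "K + M = (\<Sum>k\<in>{1..K} - S n. 1) + (\<Sum>k\<in>S n. 2)"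
    using Sn card_mono[OF _ Sn(1)] by (simp add: card_Diff_subset finite_subset)
  also have "\<dots> \<le> (\<Sum>k\<in>{1..K} - S n. card (holders S N k)) + (\<Sum>k\<in>S n. card (holders S N k))"
    using pid_scheme_holders_nonempty[OF sch] shared
    by (intro add_mono sum_mono) (auto simp: Suc_le_eq card_gt_0_iff)
  also have "\<dots> = (\<Sum>k\<in>{1..K}. card (holders S N k))"
    using Sn by (simp add: sum.subset_diff[symmetric])
  also have "\<dots> = M * N" by (rule pid_scheme_sum_card_holders[OF sch])
  also have "\<dots> = M * (N - 1) + M" using n by (cases N) auto
  finally show False using MN by linarith
qed

lemma pid_scheme_length_bound_unshared:
  assumes sch: "pid_scheme K N M p L S Zd f D" and MN: "M * (N - 1) < K"
  shows "N * L \<le> (\<Sum>n\<in>{1..N}. D n)"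
proof -
  have "L \<le> D n" if n: "n \<in> {1..N}" for n
  proof -
    obtain k where k: "k \<in> S n" and unshared: "holders S N k = {n}"
      using pid_scheme_unshared_message[OF sch MN n] by blast
    have "k \<in> {1..K}" using k pid_scheme_storage[OF sch n] by blast
    from pid_scheme_length_le_holders_download[OF sch this] unshared show ?thesis by simp
  qed
  then have "(\<Sum>n\<in>{1..N}. L) \<le> (\<Sum>n\<in>{1..N}. D n)" by (rule sum_mono)
  then show ?thesis by simp
qed

lemma pid_rates_le:
  assumes r: "r \<in> pid_rates K N M" and K: "1 \<le> K"
  shows "r \<le> M / K" and "M * (N - 1) < K \<Longrightarrow> r \<le> 1 / N"
proof -
  obtain p L S Zd f D where sch: "pid_scheme K N M p L S Zd f D"
    and r: "r = real L / real (\<Sum>n\<in>{1..N}. D n)"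
    using assms unfolding pid_rates_def by blast
  define s where "s = (\<Sum>n\<in>{1..N}. D n)"
  have KL: "K * L \<le> M * s" unfolding s_def by (rule pid_scheme_length_bound[OF sch])
  have "1 \<le> K * L" using K pid_scheme_length_pos[OF sch] by simp
  with KL have s: "0 < s" by (cases s) auto
  from KL have "real K * real L \<le> real M * real s" by (simp flip: of_nat_mult)
  with s K show "r \<le> M / K" unfolding r s_def[symmetric] by (simp add: field_simps)
  assume "M * (N - 1) < K"
  then have "N * L \<le> s" unfolding s_def by (rule pid_scheme_length_bound_unshared[OF sch])
  then have "real N * real L \<le> real s" by (simp flip: of_nat_mult)
  moreover have "0 < N" using s unfolding s_def by (cases N) auto
  ultimately show "r \<le> 1 / N" using s unfolding r s_def[symmetric] by (simp add: field_simps)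
qed

lemma pid_rates_empty:
  assumes "M * N < K"
  shows "pid_rates K N M = {}"
  using assms unfolding pid_rates_def by (auto dest: pid_scheme_messages_le_storage)

lemma pid_capacity_eqI:
  assumes "r \<in> pid_rates K N M" and "\<And>x. x \<in> pid_rates K N M \<Longrightarrow> x \<le> r"
  shows "pid_capacity K N M = r"
proof -
  have "Sup (pid_rates K N M) = r" using assms by (rule cSup_eq_maximum)
  with assms(1) show ?thesis unfolding pid_capacity_def by auto
qed

section \<open>Binary linear schemes\<close>

definition bin_vecs :: "nat \<Rightarrow> (nat \<Rightarrow> nat) set" where
  "bin_vecs n = PiE_dflt {..<n} 0 (\<lambda>_. {..<2})"

lemma bin_vecs_iff: "v \<in> bin_vecs n \<longleftrightarrow> (\<forall>i. if i < n then v i < 2 else v i = 0)"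
  unfolding bin_vecs_def PiE_dflt_def by auto

lemma finite_bin_vecs [simp]: "finite (bin_vecs n)"
  by (auto simp: bin_vecs_def)

lemma bin_vecs_nonempty [simp]: "bin_vecs n \<noteq> {}"
proof -
  have "(\<lambda>_. 0) \<in> bin_vecs n" by (simp add: bin_vecs_iff)
  then show ?thesis by blast
qed

lemma pid_msgs_binary: "pid_msgs K L 2 = PiE_dflt {1..K} (\<lambda>_. 0) (\<lambda>_. bin_vecs L)"
  unfolding pid_msgs_def PiE_dflt_def bin_vecs_iff by (auto simp: fun_eq_iff)

lemma finite_pid_msgs_binary [simp]: "finite (pid_msgs K L 2)"
  by (auto simp: pid_msgs_binary)

lemma pid_msgs_binary_nonempty [simp]: "pid_msgs K L 2 \<noteq> {}"
  by (simp add: pid_msgs_binary)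

lemma map_pmf_pid_msgs_binary:
  assumes "k \<in> {1..K}"
  shows "map_pmf (\<lambda>w. w k) (pmf_of_set (pid_msgs K L 2)) = pmf_of_set (bin_vecs L)"
proof -
  have "pmf_of_set (pid_msgs K L 2) = Pi_pmf {1..K} (\<lambda>_. 0) (\<lambda>_. pmf_of_set (bin_vecs L))"
    unfolding pid_msgs_binary by (rule Pi_pmf_of_set[symmetric]) auto
  with assms show ?thesis by (simp add: Pi_pmf_component)
qed

lemma pair_pmf_of_set:
  assumes "finite A" "A \<noteq> {}" "finite B" "B \<noteq> {}"
  shows "pair_pmf (pmf_of_set A) (pmf_of_set B) = pmf_of_set (A \<times> B)"
  by (rule pmf_eqI) (auto simp: pmf_pair assms indicator_def card_cartesian_product)

text \<open>The common randomness of a scheme is a natural number, so noise vectors are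
  transported through \<^const>\<open>list_encode\<close>.\<close>

definition vec_encode :: "nat \<Rightarrow> (nat \<Rightarrow> nat) \<Rightarrow> nat" where
  "vec_encode m z = list_encode (map z [0..<m])"

definition vec_decode :: "nat \<Rightarrow> nat \<Rightarrow> nat" where
  "vec_decode c j = (let l = list_decode c in if j < length l then l ! j else 0)"

lemma vec_decode_encode: "z \<in> bin_vecs m \<Longrightarrow> vec_decode (vec_encode m z) = z"
  unfolding vec_decode_def vec_encode_def bin_vecs_iff by (auto simp: fun_eq_iff Let_def)

lemma inj_on_vec_encode: "inj_on (vec_encode m) (bin_vecs m)"
  by (metis inj_on_inverseI vec_decode_encode)

text \<open>A linear scheme over \<open>F\<^sub>2\<close> with \<open>m\<close> answer symbols, symbol \<open>j\<close> being sent by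
  server \<open>server j\<close>. For demand \<open>k\<close> the answers are \<open>z + E\<^sub>k W\<^sub>k\<close>, where column \<open>i\<close> of
  \<open>E\<^sub>k\<close> has support \<open>U k i\<close> and \<open>z\<close> is uniform on the kernel of the parity-check matrix
  \<open>P\<close> whose row \<open>i\<close> has support \<open>X i\<close>; \<open>checks_columns\<close> says \<open>P E\<^sub>k = I\<close>.\<close>

locale binary_linear_scheme =
  fixes K N M L m :: nat
    and X :: "nat \<Rightarrow> nat set"
    and U :: "nat \<Rightarrow> nat \<Rightarrow> nat set"
    and S :: "nat \<Rightarrow> nat set"
    and server :: "nat \<Rightarrow> nat"
  assumes K_pos: "1 \<le> K" and L_pos: "1 \<le> L"
    and checks_subset: "i < L \<Longrightarrow> X i \<subseteq> {..<m}"
    and columns_subset: "k \<in> {1..K} \<Longrightarrow> i < L \<Longrightarrow> U k i \<subseteq> {..<m}"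
    and columns_stored: "k \<in> {1..K} \<Longrightarrow> i < L \<Longrightarrow> j \<in> U k i \<Longrightarrow> k \<in> S (server j)"
    and checks_columns:
      "k \<in> {1..K} \<Longrightarrow> i < L \<Longrightarrow> i' < L \<Longrightarrow> odd (card (U k i' \<inter> X i)) \<longleftrightarrow> i' = i"
    and server_range: "j < m \<Longrightarrow> server j \<in> {1..N}"
    and storage: "n \<in> {1..N} \<Longrightarrow> S n \<subseteq> {1..K} \<and> card (S n) = M"
begin

definition mask :: "nat \<Rightarrow> (nat \<Rightarrow> nat) \<Rightarrow> nat \<Rightarrow> nat" where
  "mask k v j = (\<Sum>i<L. v i * of_bool (j \<in> U k i)) mod 2"

definition encode :: "nat \<Rightarrow> (nat \<Rightarrow> nat) \<Rightarrow> (nat \<Rightarrow> nat) \<Rightarrow> nat \<Rightarrow> nat" where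
  "encode k v z = (\<lambda>j. (z j + mask k v j) mod 2)"

definition syndrome :: "(nat \<Rightarrow> nat) \<Rightarrow> nat \<Rightarrow> nat" where
  "syndrome a = (\<lambda>i. if i < L then (\<Sum>j\<in>X i. a j) mod 2 else 0)"

definition kernel :: "(nat \<Rightarrow> nat) set" where
  "kernel = {z \<in> bin_vecs m. syndrome z = (\<lambda>_. 0)}"

definition slots :: "nat \<Rightarrow> nat list" where
  "slots n = filter (\<lambda>j. server j = n) [0..<m]"

definition answer :: "nat \<Rightarrow> nat \<Rightarrow> (nat \<Rightarrow> nat \<Rightarrow> nat) \<Rightarrow> nat \<Rightarrow> nat list" where
  "answer n k w c = map (encode k (w k) (vec_decode c)) (slots n)"

definition load :: "nat \<Rightarrow> nat" where
  "load n = length (slots n)"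

definition noise :: "nat pmf" where
  "noise = pmf_of_set (vec_encode m ` kernel)"

definition answer_lists :: "(nat \<Rightarrow> nat) \<Rightarrow> nat list list" where
  "answer_lists a = map (\<lambda>n. map a (slots n)) [1..<N+1]"

lemma finite_kernel [simp]: "finite kernel"
  by (simp add: kernel_def)

lemma kernel_nonempty [simp]: "kernel \<noteq> {}"
proof -
  have "(\<lambda>_. 0) \<in> kernel" by (auto simp: kernel_def bin_vecs_iff syndrome_def fun_eq_iff)
  then show ?thesis by blast
qed

lemma mask_parity:
  assumes k: "k \<in> {1..K}" and i: "i < L"
  shows "(\<Sum>j\<in>X i. mask k v j) mod 2 = v i mod 2"
proof -
  have fin: "finite (X i)" using checks_subset[OF i] finite_subset by blast
  have "(\<Sum>j\<in>X i. mask k v j) mod 2 = (\<Sum>j\<in>X i. \<Sum>i'<L. v i' * of_bool (j \<in> U k i')) mod 2"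
    unfolding mask_def by (rule mod_sum_eq)
  also have "(\<Sum>j\<in>X i. \<Sum>i'<L. v i' * of_bool (j \<in> U k i')) = (\<Sum>i'<L. \<Sum>j\<in>X i. v i' * of_bool (j \<in> U k i'))"
    by (rule sum.swap)
  also have "\<dots> = (\<Sum>i'<L. v i' * card (U k i' \<inter> X i))"
    using fin by (simp add: Int_commute mult.commute)
  also have "(\<Sum>i'<L. v i' * card (U k i' \<inter> X i)) mod 2 = (\<Sum>i'<L. v i' * card (U k i' \<inter> X i) mod 2) mod 2"
    by (rule mod_sum_eq[symmetric])
  also have "\<dots> = (\<Sum>i'<L. v i' * of_bool (i' = i) mod 2) mod 2"
  proof -
    have termwise: "v i' * card (U k i' \<inter> X i) mod 2 = v i' * of_bool (i' = i) mod 2"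
      if "i' \<in> {..<L}" for i'
    proof -
      have "card (U k i' \<inter> X i) mod 2 = of_bool (i' = i)"
        using checks_columns[OF k i] that by (simp flip: of_bool_odd_eq_mod_2)
      then show ?thesis by (metis mod_mult_right_eq)
    qed
    have "(\<Sum>i'<L. v i' * card (U k i' \<inter> X i) mod 2) = (\<Sum>i'<L. v i' * of_bool (i' = i) mod 2)"
      by (rule sum.cong[OF refl termwise])
    then show ?thesis by (rule arg_cong)
  qed
  also have "\<dots> = (\<Sum>i'<L. v i' * of_bool (i' = i)) mod 2"
    by (rule mod_sum_eq)
  also have "\<dots> = v i mod 2"
    using i by simp
  finally show ?thesis .
qed

lemma syndrome_encode:
  assumes k: "k \<in> {1..K}" and v: "v \<in> bin_vecs L"
  shows "syndrome (encode k v z) = (\<lambda>i. (syndrome z i + v i) mod 2)"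
proof
  fix i
  show "syndrome (encode k v z) i = (syndrome z i + v i) mod 2"
  proof (cases "i < L")
    case True
    have "(\<Sum>j\<in>X i. encode k v z j) mod 2 = (\<Sum>j\<in>X i. z j + mask k v j) mod 2"
      unfolding encode_def by (rule mod_sum_eq)
    also have "\<dots> = ((\<Sum>j\<in>X i. z j) + (\<Sum>j\<in>X i. mask k v j) mod 2) mod 2"
      by (simp add: sum.distrib mod_add_right_eq)
    also have "\<dots> = (syndrome z i + v i) mod 2"
      using True v by (simp add: mask_parity[OF k] syndrome_def bin_vecs_iff mod_add_left_eq)
    finally show ?thesis using True by (simp add: syndrome_def)
  next
    case False
    with v show ?thesis by (simp add: syndrome_def bin_vecs_iff)
  qed
qed

lemma syndrome_encode_kernel:
  assumes "k \<in> {1..K}" and v: "v \<in> bin_vecs L" and "z \<in> kernel"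
  shows "syndrome (encode k v z) = v"
proof -
  have "v i mod 2 = v i" for i using v unfolding bin_vecs_iff by (metis mod_less mod_0)
  with assms show ?thesis by (simp add: syndrome_encode kernel_def)
qed

lemma syndrome_in_bin_vecs: "syndrome a \<in> bin_vecs L"
  by (simp add: syndrome_def bin_vecs_iff)

lemma encode_in_bin_vecs:
  assumes k: "k \<in> {1..K}" and z: "z \<in> bin_vecs m"
  shows "encode k v z \<in> bin_vecs m"
proof -
  have "mask k v j = 0" if j: "m \<le> j" for j
  proof -
    have "j \<notin> U k i" if "i < L" for i
      using columns_subset[OF k that] j by auto
    then show ?thesis unfolding mask_def by simp
  qed
  with z show ?thesis unfolding bin_vecs_iff encode_def by auto
qed

lemma encode_encode:
  assumes "a \<in> bin_vecs m"
  shows "encode k v (encode k v a) = a"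
proof
  fix j
  have "a j < 2" using assms unfolding bin_vecs_iff by (metis zero_less_numeral)
  then show "encode k v (encode k v a) j = a j"
    unfolding encode_def by (simp add: mod_add_left_eq add.assoc flip: mult_2)
qed

lemma kernel_subset: "kernel \<subseteq> bin_vecs m"
  by (simp add: kernel_def)

lemma bij_betw_encode:
  assumes k: "k \<in> {1..K}"
  shows "bij_betw (\<lambda>(v, z). encode k v z) (bin_vecs L \<times> kernel) (bin_vecs m)"
proof (rule bij_betw_byWitness[where f' = "\<lambda>a. (syndrome a, encode k (syndrome a) a)"], goal_cases)
  case 1
  show ?case using k kernel_subset by (auto simp: syndrome_encode_kernel encode_encode)
next
  case 2
  show ?case by (simp add: encode_encode)
next
  case 3
  show ?case using k kernel_subset by (auto simp: encode_in_bin_vecs)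
next
  case 4
  have "syndrome (encode k (syndrome a) a) = (\<lambda>_. 0)" for a
    using syndrome_encode[OF k syndrome_in_bin_vecs] by simp
  then show ?case using k by (auto simp: syndrome_in_bin_vecs encode_in_bin_vecs kernel_def)
qed

lemma set_pmf_noise: "set_pmf noise = vec_encode m ` kernel"
  by (simp add: noise_def)

lemma noise_eq_map_pmf: "noise = map_pmf (vec_encode m) (pmf_of_set kernel)"
  unfolding noise_def
  by (rule map_pmf_of_set_inj[symmetric])
    (auto intro: inj_on_subset[OF inj_on_vec_encode kernel_subset])

lemma pid_answers_vec_encode:
  assumes "z \<in> kernel"
  shows "pid_answers N answer k w (vec_encode m z) = answer_lists (encode k (w k) z)"
  using assms kernel_subset
  by (auto simp: pid_answers_def answer_lists_def answer_def vec_decode_encode)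

lemma inj_on_answer_lists: "inj_on answer_lists (bin_vecs m)"
proof (rule inj_onI)
  fix a b assume a: "a \<in> bin_vecs m" and b: "b \<in> bin_vecs m" and eq: "answer_lists a = answer_lists b"
  show "a = b"
  proof
    fix j show "a j = b j"
    proof (cases "j < m")
      case True
      then have n: "server j \<in> set [1..<N+1]" and j: "j \<in> set (slots (server j))"
        using server_range[OF True] by (auto simp: slots_def)
      have "\<forall>n\<in>set [1..<N+1]. map a (slots n) = map b (slots n)"
        using eq unfolding answer_lists_def map_eq_conv .
      with n have "map a (slots (server j)) = map b (slots (server j))" by blast
      with j show ?thesis by (simp add: map_eq_conv)
    next
      case False
      with a b show ?thesis unfolding bin_vecs_iff by metis
    qed
  qed
qed

lemma answers_distribution:
  assumes k: "k \<in> {1..K}"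
  shows "map_pmf (\<lambda>(w, c). (pid_answers N answer k w c, w k))
           (pair_pmf (pmf_of_set (pid_msgs K L 2)) noise)
       = map_pmf (\<lambda>a. (answer_lists a, syndrome a)) (pmf_of_set (bin_vecs m))"
proof -
  let ?W = "pmf_of_set (pid_msgs K L 2)"
  have "map_pmf (\<lambda>(w, c). (pid_answers N answer k w c, w k)) (pair_pmf ?W noise)
      = map_pmf (\<lambda>(w, z). (pid_answers N answer k w (vec_encode m z), w k))
          (pair_pmf ?W (pmf_of_set kernel))"
    by (simp add: noise_eq_map_pmf pair_map_pmf2 pmf.map_comp o_def split_def)
  also have "\<dots> = map_pmf (\<lambda>(v, z). (answer_lists (encode k v z), v))
      (map_pmf (\<lambda>(w, z). (w k, z)) (pair_pmf ?W (pmf_of_set kernel)))"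
    by (auto simp: pmf.map_comp pid_answers_vec_encode set_pair_pmf intro!: map_pmf_cong)
  also have "map_pmf (\<lambda>(w, z). (w k, z)) (pair_pmf ?W (pmf_of_set kernel))
      = pair_pmf (pmf_of_set (bin_vecs L)) (pmf_of_set kernel)"
    using map_pair[of "\<lambda>w. w k" id ?W "pmf_of_set kernel"]
    by (simp add: map_pmf_pid_msgs_binary[OF k])
  also have "\<dots> = pmf_of_set (bin_vecs L \<times> kernel)"
    by (simp add: pair_pmf_of_set)
  also have "map_pmf (\<lambda>(v, z). (answer_lists (encode k v z), v)) (pmf_of_set (bin_vecs L \<times> kernel))
      = map_pmf (\<lambda>a. (answer_lists a, syndrome a))
          (map_pmf (\<lambda>(v, z). encode k v z) (pmf_of_set (bin_vecs L \<times> kernel)))"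
    using k by (auto simp: pmf.map_comp syndrome_encode_kernel intro!: map_pmf_cong)
  also have "map_pmf (\<lambda>(v, z). encode k v z) (pmf_of_set (bin_vecs L \<times> kernel)) = pmf_of_set (bin_vecs m)"
    by (rule map_pmf_of_set_bij_betw[OF bij_betw_encode[OF k]]) auto
  finally show ?thesis .
qed

lemma mask_unstored:
  assumes "k \<in> {1..K}" and "k \<notin> S (server j)"
  shows "mask k v j = 0"
proof -
  have "j \<notin> U k i" if "i < L" for i
    using assms columns_stored[OF assms(1) that] by blast
  then show ?thesis unfolding mask_def by simp
qed

lemma answer_local:
  assumes k: "k \<in> {1..K}" and agree: "\<forall>j\<in>S n. w j = w' j"
  shows "answer n k w c = answer n k w' c"
proof (cases "k \<in> S n")
  case True
  with agree show ?thesis by (simp add: answer_def)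
next
  case False
  then have "mask k v j = 0" if "j \<in> set (slots n)" for v j
    using that mask_unstored[OF k] by (simp add: slots_def)
  then show ?thesis by (simp add: answer_def encode_def)
qed

lemma pid_scheme: "pid_scheme K N M 2 L S noise answer load"
  unfolding pid_scheme_def
proof (intro conjI ballI allI impI)
  show "prime (2::nat)" "1 \<le> L" using L_pos by simp_all
next
  fix n assume "n \<in> {1..N}"
  then show "S n \<subseteq> {1..K}" "card (S n) = M" using storage by auto
next
  fix n k c and w w' :: "nat \<Rightarrow> nat \<Rightarrow> nat"
  assume "k \<in> {1..K}" and "\<forall>j\<in>S n. w j = w' j"
  then show "answer n k w c = answer n k w' c" by (rule answer_local)
next
  fix n k w c
  show "length (answer n k w c) = load n" "set (answer n k w c) \<subseteq> {..<2}"
    by (auto simp: answer_def load_def encode_def)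
next
  fix k w w' c c'
  assume k: "k \<in> {1..K}" and w: "w \<in> pid_msgs K L 2" and w': "w' \<in> pid_msgs K L 2"
    and "c \<in> set_pmf noise" "c' \<in> set_pmf noise"
    and eq: "pid_answers N answer k w c = pid_answers N answer k w' c'"
  then obtain z z' where z: "z \<in> kernel" "c = vec_encode m z" and z': "z' \<in> kernel" "c' = vec_encode m z'"
    by (auto simp: set_pmf_noise)
  have v: "w k \<in> bin_vecs L" "w' k \<in> bin_vecs L"
    using w w' k by (auto simp: pid_msgs_binary PiE_dflt_def)
  have "answer_lists (encode k (w k) z) = answer_lists (encode k (w' k) z')"
    using eq z z' by (simp add: pid_answers_vec_encode)
  then have "encode k (w k) z = encode k (w' k) z'"
    using z z' kernel_subset encode_in_bin_vecs[OF k] inj_on_answer_lists by (meson inj_onD subsetD)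
  then have "syndrome (encode k (w k) z) = syndrome (encode k (w' k) z')" by simp
  then show "w k = w' k"
    by (simp only: syndrome_encode_kernel[OF k v(1) z(1)] syndrome_encode_kernel[OF k v(2) z'(1)])
next
  fix k assume "k \<in> {1..K}"
  moreover have "1 \<in> {1..K}" using K_pos by simp
  ultimately show "map_pmf (\<lambda>(w, c). (pid_answers N answer k w c, w k)) (pair_pmf (pmf_of_set (pid_msgs K L 2)) noise)
    = map_pmf (\<lambda>(w, c). (pid_answers N answer 1 w c, w 1)) (pair_pmf (pmf_of_set (pid_msgs K L 2)) noise)"
    by (simp add: answers_distribution)
qed

lemma sum_load: "(\<Sum>n\<in>{1..N}. load n) = m"
proof -
  have "(\<Sum>n\<in>{1..N}. load n) = (\<Sum>n\<in>{1..N}. card {j\<in>{..<m}. server j = n})"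
    unfolding load_def slots_def
    by (intro sum.cong refl) (simp add: distinct_length_filter Int_def conj_commute)
  also have "\<dots> = card (\<Union>n\<in>{1..N}. {j\<in>{..<m}. server j = n})"
    by (rule card_UN_disjoint[symmetric]) auto
  also have "(\<Union>n\<in>{1..N}. {j\<in>{..<m}. server j = n}) = {..<m}"
    using server_range by auto
  finally show ?thesis by simp
qed

lemma rate_in_pid_rates: "real L / real m \<in> pid_rates K N M"
proof -
  have "real L / real m = real L / real (\<Sum>n\<in>{1..N}. load n)" by (simp only: sum_load)
  with pid_scheme show ?thesis unfolding pid_rates_def by blast
qed

end

section \<open>Designs with two messages per server\<close>

definition pair_storage :: "nat \<Rightarrow> nat \<Rightarrow> nat set" where
  "pair_storage K n = (if 2 * n \<le> K then {2 * n - 1, 2 * n} else {K - 1, K})"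

lemma pair_storage_subset_card:
  assumes "2 \<le> K" and "1 \<le> n"
  shows "pair_storage K n \<subseteq> {1..K} \<and> card (pair_storage K n) = 2"
  using assms by (auto simp: pair_storage_def)

lemma mem_pair_storage:
  assumes "k \<in> {1..K}"
  shows "k \<in> pair_storage K ((k + 1) div 2)"
  using assms unfolding pair_storage_def by auto

lemma binary_linear_scheme_pairs:
  assumes K: "2 \<le> K" and N: "(K + 1) div 2 \<le> N"
  shows "binary_linear_scheme K N 2 1 ((K + 1) div 2) (\<lambda>_. {..<(K + 1) div 2})
           (\<lambda>k _. {(k + 1) div 2 - 1}) (pair_storage K) Suc"
proof
  fix k assume k: "k \<in> {1..K}"
  then have slot: "(k + 1) div 2 - 1 < (K + 1) div 2" by auto
  then show "{(k + 1) div 2 - 1} \<subseteq> {..<(K + 1) div 2}" by simp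
  show "odd (card ({(k + 1) div 2 - 1} \<inter> {..<(K + 1) div 2})) \<longleftrightarrow> i' = i"
    if "i < 1" and "i' < 1" for i i' :: nat
    using slot that by simp
  show "k \<in> pair_storage K (Suc j)" if "j \<in> {(k + 1) div 2 - 1}" for j
    using that k mem_pair_storage[OF k] by (simp add: Suc_diff_le)
next
  show "Suc j \<in> {1..N}" if "j < (K + 1) div 2" for j using that N by simp
  show "pair_storage K n \<subseteq> {1..K} \<and> card (pair_storage K n) = 2" if "n \<in> {1..N}" for n
    using that K pair_storage_subset_card by simp
qed (use K in auto)

text \<open>The design for odd \<open>K\<close>: messages 1, 2, 3 are stored cyclically on servers 1, 2, 3, which
  send symbols 0, 1, 2; messages \<open>2t + 2\<close> and \<open>2t + 3\<close> share server \<open>t + 3\<close>, which sends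
  symbols \<open>2t + 1\<close> and \<open>2t + 2\<close>.\<close>

definition odd_checks :: "nat \<Rightarrow> nat \<Rightarrow> nat set" where
  "odd_checks K i =
     (if i = 0 then {0, 2} \<union> {j. 3 \<le> j \<and> j < K \<and> odd j}
      else {1, 2} \<union> {j. 3 \<le> j \<and> j < K \<and> even j})"

definition odd_columns :: "nat \<Rightarrow> nat \<Rightarrow> nat set" where
  "odd_columns k i =
     (if k = 1 then (if i = 0 then {0} else {0, 2})
      else if k = 2 then (if i = 0 then {0} else {1})
      else if k = 3 then (if i = 0 then {1, 2} else {1})
      else {2 * ((k - 2) div 2) + 1 + i})"

definition odd_storage :: "nat \<Rightarrow> nat \<Rightarrow> nat set" where
  "odd_storage K n =
     (if n = 2 then {2, 3} else if n = 3 then {1, 3}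
      else if 4 \<le> n \<and> 2 * n - 3 \<le> K then {2 * n - 4, 2 * n - 3} else {1, 2})"

definition odd_server :: "nat \<Rightarrow> nat" where
  "odd_server j = (if j < 3 then j + 1 else (j + 1) div 2 + 2)"

lemma odd_columns_block:
  assumes K: "odd K" and k: "4 \<le> k" "k \<le> K"
  obtains t where "1 \<le> t" and "2 * t + 3 \<le> K" and "k = 2 * t + 2 \<or> k = 2 * t + 3"
    and "\<forall>i. odd_columns k i = {2 * t + 1 + i}"
    and "\<forall>i<2. odd_server (2 * t + 1 + i) = t + 3"
proof
  define t where "t = (k - 2) div 2"
  show t: "k = 2 * t + 2 \<or> k = 2 * t + 3" unfolding t_def using k by presburger
  with k show "1 \<le> t" by auto
  from t K k show "2 * t + 3 \<le> K" by presburger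
  show "\<forall>i. odd_columns k i = {2 * t + 1 + i}"
    using k unfolding t_def odd_columns_def by simp
  show "\<forall>i<2. odd_server (2 * t + 1 + i) = t + 3"
    using \<open>1 \<le> t\<close> unfolding odd_server_def by presburger
qed

lemma odd_columns_stored:
  assumes K: "odd K" "3 \<le> K" and k: "k \<in> {1..K}" and i: "i < 2" and j: "j \<in> odd_columns k i"
  shows "k \<in> odd_storage K (odd_server j)"
proof (cases "k \<le> 3")
  case True
  with k j show ?thesis by (auto simp: odd_columns_def odd_storage_def odd_server_def split: if_splits)
next
  case False
  with k have k4: "4 \<le> k" and kK: "k \<le> K" by auto
  obtain t where "1 \<le> t" "2 * t + 3 \<le> K" "k = 2 * t + 2 \<or> k = 2 * t + 3"
    and "\<forall>i. odd_columns k i = {2 * t + 1 + i}"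
    and "\<forall>i<2. odd_server (2 * t + 1 + i) = t + 3"
    by (rule odd_columns_block[OF K(1) k4 kK])
  with i j show ?thesis by (auto simp: odd_storage_def)
qed

lemma odd_checks_columns:
  assumes K: "odd K" "3 \<le> K" and k: "k \<in> {1..K}" and i: "i < 2" and i': "i' < 2"
  shows "odd (card (odd_columns k i' \<inter> odd_checks K i)) \<longleftrightarrow> i' = i"
proof -
  have "i = 0 \<or> i = 1" "i' = 0 \<or> i' = 1" using i i' by auto
  show ?thesis
  proof (cases "k \<le> 3")
    case True
    with k have "k = 1 \<or> k = 2 \<or> k = 3" by auto
    with \<open>i = 0 \<or> i = 1\<close> \<open>i' = 0 \<or> i' = 1\<close> show ?thesis
      using K unfolding odd_columns_def odd_checks_def by auto
  next
    case False
    with k have k4: "4 \<le> k" and kK: "k \<le> K" by auto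
    obtain t where "1 \<le> t" "2 * t + 3 \<le> K" "k = 2 * t + 2 \<or> k = 2 * t + 3"
      and "\<forall>i. odd_columns k i = {2 * t + 1 + i}"
      and "\<forall>i<2. odd_server (2 * t + 1 + i) = t + 3"
      by (rule odd_columns_block[OF K(1) k4 kK])
    with \<open>i = 0 \<or> i = 1\<close> \<open>i' = 0 \<or> i' = 1\<close> show ?thesis
      unfolding odd_checks_def by auto
  qed
qed

lemma binary_linear_scheme_odd:
  assumes K: "odd K" "3 \<le> K" and N: "(K + 3) div 2 \<le> N"
  shows "binary_linear_scheme K N 2 2 K (odd_checks K) odd_columns (odd_storage K) odd_server"
proof
  fix k i :: nat assume k: "k \<in> {1..K}" and i: "i < 2"
  show "odd_columns k i \<subseteq> {..<K}"
  proof (cases "k \<le> 3")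
    case True
    with k i K show ?thesis by (auto simp: odd_columns_def)
  next
    case False
    with k have k4: "4 \<le> k" and kK: "k \<le> K" by auto
    obtain t where "1 \<le> t" "2 * t + 3 \<le> K" "k = 2 * t + 2 \<or> k = 2 * t + 3"
      and "\<forall>i. odd_columns k i = {2 * t + 1 + i}"
      and "\<forall>i<2. odd_server (2 * t + 1 + i) = t + 3"
      by (rule odd_columns_block[OF K(1) k4 kK])
    with i show ?thesis by auto
  qed
  show "j \<in> odd_columns k i \<Longrightarrow> k \<in> odd_storage K (odd_server j)" for j
    by (rule odd_columns_stored[OF K k i])
  show "i' < 2 \<Longrightarrow> odd (card (odd_columns k i' \<inter> odd_checks K i)) \<longleftrightarrow> i' = i" for i'
    by (rule odd_checks_columns[OF K k i])
next
  show "odd_checks K i \<subseteq> {..<K}" if "i < 2" for i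
    using K by (auto simp: odd_checks_def)
  show "odd_server j \<in> {1..N}" if "j < K" for j
    using that K N unfolding odd_server_def by auto presburger
  show "odd_storage K n \<subseteq> {1..K} \<and> card (odd_storage K n) = 2" if "n \<in> {1..N}" for n
    using K by (auto simp: odd_storage_def)
qed (use K in auto)

lemma pid_rates_pairs:
  assumes "2 \<le> K" and "(K + 1) div 2 \<le> N"
  shows "1 / real ((K + 1) div 2) \<in> pid_rates K N 2"
  using binary_linear_scheme.rate_in_pid_rates[OF binary_linear_scheme_pairs[OF assms]] by simp

lemma pid_rates_odd:
  assumes "odd K" and "3 \<le> K" and "(K + 3) div 2 \<le> N"
  shows "2 / real K \<in> pid_rates K N 2"
  using binary_linear_scheme.rate_in_pid_rates[OF binary_linear_scheme_odd[OF assms]] by simp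

lemma pid_capacity_two_above_half:
  assumes K: "2 \<le> K" and N: "(K + 1) div 2 + 1 \<le> N"
  shows "pid_capacity K N 2 = 2 / real K"
proof (rule pid_capacity_eqI)
  show "2 / real K \<in> pid_rates K N 2"
  proof (cases "even K")
    case True
    with pid_rates_pairs[OF K] N show ?thesis by (auto elim!: evenE)
  next
    case False
    with K N have "3 \<le> K" and "(K + 3) div 2 \<le> N" by presburger+
    with False show ?thesis by (rule pid_rates_odd)
  qed
  show "x \<le> 2 / real K" if "x \<in> pid_rates K N 2" for x
    using pid_rates_le(1)[OF that] K by simp
qed

lemma pid_capacity_two_at_half:
  assumes K: "2 \<le> K" and N: "N = (K + 1) div 2"
  shows "pid_capacity K N 2 = 1 / real N"
proof (rule pid_capacity_eqI)
  show "1 / real N \<in> pid_rates K N 2"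
    using pid_rates_pairs[OF K] N by simp
  have "2 * (N - 1) < K" using K N by presburger
  then show "x \<le> 1 / real N" if "x \<in> pid_rates K N 2" for x
    using pid_rates_le(2)[OF that] K by simp
qed

lemma pid_capacity_eq_0:
  assumes "M * N < K"
  shows "pid_capacity K N M = 0"
  using pid_rates_empty[OF assms] by (simp add: pid_capacity_def)

lemma nat_ceiling_half: "nat \<lceil>real K / 2\<rceil> = (K + 1) div 2"
proof -
  have "\<lceil>real K / 2\<rceil> = int ((K + 1) div 2)"
    by (rule ceiling_unique) (cases "even K"; auto elim!: evenE oddE simp: field_simps)+
  then show ?thesis by simp
qed

theorem corollary2:
  fixes K N :: nat
  assumes "K \<ge> 2"
  shows "pid_capacity K N 2 =
    (if N \<ge> nat \<lceil>real K / 2\<rceil> + 1 then 2 / real K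
     else if N = nat \<lceil>real K / 2\<rceil> then 1 / real (nat \<lceil>real K / 2\<rceil>)
     else 0)"
proof -
  define c where "c = (K + 1) div 2"
  have c: "nat \<lceil>real K / 2\<rceil> = c" unfolding c_def by (rule nat_ceiling_half)
  consider "c + 1 \<le> N" | "N = c" | "N < c" by linarith
  then show ?thesis
  proof cases
    case 1
    with assms show ?thesis by (simp add: c c_def pid_capacity_two_above_half)
  next
    case 2
    with assms show ?thesis by (simp add: c c_def pid_capacity_two_at_half)
  next
    case 3
    then have "2 * N < K" unfolding c_def by presburger
    with 3 show ?thesis by (simp add: c pid_capacity_eq_0)
  qed
qed

end
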